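(* Let $a=(a_{ij})_{1\le i\le j\le n}\in(\mathbb C^\times)^N$, $b\in\mathbb C^N$, $\lambda\in\mathbb C^n$ and $m\in\{0,\dots,l-1\}^N$. In the Schnizer module $V_\varepsilon(a,b,\lambda)$, $$F_{\theta_n}v(m)=\sum_{r^s\in R^F}(-1)^{s+n}a(\epsilon_{r^s})\varepsilon^{C(m+b,r^s)-\lambda^{(s)}+1-s}[-m_{s-1,s-1}+m_{s,s}-b_{s-1,s-1}+b_{s,s}-\lambda_s]_\varepsilon\,v(m+\epsilon_{r^s}),$$ $$E_{\theta_n}v(m)=\sum_{r^s\in R^E}(-1)^{s+n}a(\alpha_{r^s})\varepsilon^{D(m+b,r^s)+1-s}[-m_{1,n-s+1}-b_{1,n-s+1}]_\varepsilon\,v(m+\alpha_{r^s}),$$ where $\lambda^{(s)}=\sum_{k=1}^{s-1}\lambda_k-\sum_{k=s+1}^n\lambda_k$.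
   Context: $n\ge1$, $I=\{1,\dots,n\}$, $N=n(n+1)/2$; $l>2$ odd, $\gcd(l,n+1)=1$, $\varepsilon$ a primitive $l$-th root of unity; complex powers of $\varepsilon$ use a fixed logarithm; $[c]_\varepsilon=(\varepsilon^c-\varepsilon^{-c})/(\varepsilon-\varepsilon^{-1})$; $[u,v]_x=uv-xvu$. $U_\varepsilon$: $\mathbb C$-algebra generated by $E_i,F_i,K_\mu$ ($i\in I$, $\mu$ in the root lattice of $\mathfrak{sl}_{n+1}$) with the relations of $U_q(\mathfrak{sl}_{n+1})$ at $q=\varepsilon$. $F_{\theta_n}=[F_n,[F_{n-1},\dots,[F_2,F_1]_{\varepsilon^{-1}}\dots]_{\varepsilon^{-1}}$, $E_{\theta_n}=[E_n,[E_{n-1},\dots,[E_2,E_1]_{\varepsilon^{-1}}\dots]_{\varepsilon^{-1}}$. Schnizer module $V_\varepsilon(a,b,\lambda)$: basis $v(m)$, $m=(m_{ij})_{1\le i\le j\le n}\in\{0,\dots,l-1\}^N$, $v(m+lm')=v(m)$; $\epsilon_{ij}$ unit vectors; $\alpha_{i,j}=\sum_{k=j+1}^i\epsilon_{k-1,n-i+k}-\sum_{k=j}^i\epsilon_{k,n-i+k}$ ($j\le i$); for $c\in\mathbb C^N$ ($c_{ij}=0$ outside $1\le i\le j\le n$) $M_{i,j}(c)=\sum_{k=i-1}^{j-1}(c_{i,k}-c_{i-1,k})+\sum_{k=i}^j(c_{i,k}-c_{i+1,k})$, $N_{i,j}(c)=c_{j-1,n-i+j}-c_{j,n-i+j}$,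 $\mu_i(c)=\sum_{k=i-1}^nc_{i-1,k}-2\sum_{k=i}^nc_{i,k}+\sum_{k=i+1}^nc_{i+1,k}$; $a(c)=\prod a_{ij}^{c_{ij}}$ ($c\in\mathbb Z^N$). Action: $E_iv(m)=\sum_{j=1}^ia(\alpha_{i,j})[N_{i,j}(m+b)]_\varepsilon v(m+\alpha_{i,j})$, $F_iv(m)=\sum_{j=i}^na_{i,j}[M_{i,j}(m+b)-\lambda_i]_\varepsilon v(m+\epsilon_{i,j})$, $K_{\alpha_i}v(m)=\varepsilon^{\mu_i(m+b)+\lambda_i}v(m)$. Index sets: for $s\in I$, $R_s=\{r^s\in I^n:r^s_1\ge\dots\ge r^s_{s-1}\ge r^s_s<r^s_{s+1}<\dots<r^s_n\}$, $R^F_s=\{r^s\in R_s:k\le r^s_k\le n\ \forall k\}$, $R^E_s=\{r^s\in R_s:1\le r^s_k\le k\ \forall k\}$, $R^F=\bigsqcup_sR^F_s$, $R^E=\bigsqcup_sR^E_s$; $\epsilon_{r^s}=\sum_k\epsilon_{k,r^s_k}$, $\alpha_{r^s}=\sum_k\alpha_{k,r^s_k}$. With $r^s_0:=n$: $C(c,r^s)=c_{s-1,s-1}-c_{n,n}+\sum_{k=1}^nc_{1,k}+\sum_{k=1}^{s-1}\sum_{p=r^s_{k+1}}^{r^s_k-1}c_{k,p}-\sum_{k=1}^s\sum_{p=r^s_k+1}^{r^s_{k-1}}c_{k,p}$ ($r^s\in R^F_s$); $D(c,r^s)=-\sum_{k=n-s+2}^nc_{1,k}-\sum_{k=s+1}^n(c_{r^s_k-1,n-k+r^s_k}-c_{r^s_k,n-k+r^s_k})$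 ($r^s\in R^E_s$). *)

theory Defs
  imports Complex_Main
begin

(* Arrays indexed by pairs (i,j); only the triangle 1 <= i <= j <= n is meaningful. *)
type_synonym iarr = "nat \<Rightarrow> nat \<Rightarrow> int"
type_synonym carr = "nat \<Rightarrow> nat \<Rightarrow> complex"
(* vectors of the Schnizer module: coefficient functions on the labels m *)
type_synonym vec = "iarr \<Rightarrow> complex"

definition tri :: "nat \<Rightarrow> nat \<Rightarrow> nat \<Rightarrow> bool" where
  "tri n i j \<longleftrightarrow> 1 \<le> i \<and> i \<le> j \<and> j \<le> n"

definition ent :: "nat \<Rightarrow> carr \<Rightarrow> nat \<Rightarrow> nat \<Rightarrow> complex" where
  "ent n c i j = (if tri n i j then c i j else 0)"

(* complex powers of eps = exp L, with the fixed logarithm L *)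
definition qpow :: "complex \<Rightarrow> complex \<Rightarrow> complex" where
  "qpow L x = exp (x * L)"

definition qnum :: "complex \<Rightarrow> complex \<Rightarrow> complex" where
  "qnum L x = (qpow L x - qpow L (- x)) / (qpow L 1 - qpow L (- 1))"

definition labels :: "nat \<Rightarrow> nat \<Rightarrow> iarr set" where
  "labels n l = {m. \<forall>i j. (tri n i j \<longrightarrow> 0 \<le> m i j \<and> m i j < int l) \<and>
                            (\<not> tri n i j \<longrightarrow> m i j = 0)}"

definition normlab :: "nat \<Rightarrow> nat \<Rightarrow> iarr \<Rightarrow> iarr" where
  "normlab n l m = (\<lambda>i j. if tri n i j then m i j mod int l else 0)"

(* basis vector v(m), with v(m + l m') = v(m) *)
definition bv :: "nat \<Rightarrow> nat \<Rightarrow> iarr \<Rightarrow> vec" where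
  "bv n l m = (\<lambda>k. if k = normlab n l m then 1 else 0)"

definition lin :: "nat \<Rightarrow> nat \<Rightarrow> (iarr \<Rightarrow> vec) \<Rightarrow> vec \<Rightarrow> vec" where
  "lin n l f w = (\<lambda>k. \<Sum>m\<in>labels n l. w m * f m k)"

definition addi :: "iarr \<Rightarrow> iarr \<Rightarrow> iarr" where
  "addi x y = (\<lambda>i j. x i j + y i j)"

definition unitv :: "nat \<Rightarrow> nat \<Rightarrow> iarr" where
  "unitv i j = (\<lambda>p q. if p = i \<and> q = j then 1 else 0)"

definition alpha :: "nat \<Rightarrow> nat \<Rightarrow> nat \<Rightarrow> iarr" where
  "alpha n i j = (\<lambda>p q. (\<Sum>k\<in>{j+1..i}. unitv (k-1) (n-i+k) p q)
                        - (\<Sum>k\<in>{j..i}. unitv k (n-i+k) p q))"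

definition shiftc :: "iarr \<Rightarrow> carr \<Rightarrow> carr" where
  "shiftc m b = (\<lambda>i j. of_int (m i j) + b i j)"

definition Mfun :: "nat \<Rightarrow> carr \<Rightarrow> nat \<Rightarrow> nat \<Rightarrow> complex" where
  "Mfun n c i j = (\<Sum>k\<in>{i-1..j-1}. ent n c i k - ent n c (i-1) k)
                + (\<Sum>k\<in>{i..j}. ent n c i k - ent n c (i+1) k)"

definition Nfun :: "nat \<Rightarrow> carr \<Rightarrow> nat \<Rightarrow> nat \<Rightarrow> complex" where
  "Nfun n c i j = ent n c (j-1) (n-i+j) - ent n c j (n-i+j)"

definition apow :: "nat \<Rightarrow> carr \<Rightarrow> iarr \<Rightarrow> complex" where
  "apow n a c = (\<Prod>p\<in>{p. tri n (fst p) (snd p)}. a (fst p) (snd p) powi c (fst p) (snd p))"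

definition Ebas :: "nat \<Rightarrow> nat \<Rightarrow> complex \<Rightarrow> carr \<Rightarrow> carr \<Rightarrow> nat \<Rightarrow> iarr \<Rightarrow> vec" where
  "Ebas n l L a b i m = (\<lambda>k. \<Sum>j\<in>{1..i}. apow n a (alpha n i j)
       * qnum L (Nfun n (shiftc m b) i j) * bv n l (addi m (alpha n i j)) k)"

definition Fbas :: "nat \<Rightarrow> nat \<Rightarrow> complex \<Rightarrow> carr \<Rightarrow> carr \<Rightarrow> (nat \<Rightarrow> complex) \<Rightarrow> nat \<Rightarrow> iarr \<Rightarrow> vec" where
  "Fbas n l L a b lam i m = (\<lambda>k. \<Sum>j\<in>{i..n}. a i j
       * qnum L (Mfun n (shiftc m b) i j - lam i) * bv n l (addi m (unitv i j)) k)"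

definition Eop :: "nat \<Rightarrow> nat \<Rightarrow> complex \<Rightarrow> carr \<Rightarrow> carr \<Rightarrow> nat \<Rightarrow> vec \<Rightarrow> vec" where
  "Eop n l L a b i = lin n l (Ebas n l L a b i)"

definition Fop :: "nat \<Rightarrow> nat \<Rightarrow> complex \<Rightarrow> carr \<Rightarrow> carr \<Rightarrow> (nat \<Rightarrow> complex) \<Rightarrow> nat \<Rightarrow> vec \<Rightarrow> vec" where
  "Fop n l L a b lam i = lin n l (Fbas n l L a b lam i)"

definition qcomm :: "(vec \<Rightarrow> vec) \<Rightarrow> (vec \<Rightarrow> vec) \<Rightarrow> complex \<Rightarrow> vec \<Rightarrow> vec" where
  "qcomm U V x w = (\<lambda>k. U (V w) k - x * V (U w) k)"

(* F_{theta_k} = [F_k,[F_{k-1},...,[F_2,F_1]_{eps^-1}...]_{eps^-1}; index 0 unused *)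
fun Fth :: "nat \<Rightarrow> nat \<Rightarrow> complex \<Rightarrow> carr \<Rightarrow> carr \<Rightarrow> (nat \<Rightarrow> complex) \<Rightarrow> nat \<Rightarrow> vec \<Rightarrow> vec" where
  "Fth n l L a b lam 0 = (\<lambda>w k. 0)"
| "Fth n l L a b lam (Suc 0) = Fop n l L a b lam 1"
| "Fth n l L a b lam (Suc (Suc k)) =
     qcomm (Fop n l L a b lam (Suc (Suc k))) (Fth n l L a b lam (Suc k)) (qpow L (-1))"

fun Eth :: "nat \<Rightarrow> nat \<Rightarrow> complex \<Rightarrow> carr \<Rightarrow> carr \<Rightarrow> nat \<Rightarrow> vec \<Rightarrow> vec" where
  "Eth n l L a b 0 = (\<lambda>w k. 0)"
| "Eth n l L a b (Suc 0) = Eop n l L a b 1"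
| "Eth n l L a b (Suc (Suc k)) =
     qcomm (Eop n l L a b (Suc (Suc k))) (Eth n l L a b (Suc k)) (qpow L (-1))"

(* index sets R_s, R^F_s, R^E_s; r : {1..n} -> {1..n}, extended by 0 *)
definition Rset :: "nat \<Rightarrow> nat \<Rightarrow> (nat \<Rightarrow> nat) set" where
  "Rset n s = {r. (\<forall>k. (1 \<le> k \<and> k \<le> n \<longrightarrow> 1 \<le> r k \<and> r k \<le> n) \<and>
                        (\<not> (1 \<le> k \<and> k \<le> n) \<longrightarrow> r k = 0)) \<and>
                  (\<forall>k. 1 \<le> k \<and> k < s \<longrightarrow> r (k+1) \<le> r k) \<and>
                  (\<forall>k. s \<le> k \<and> k < n \<longrightarrow> r k < r (k+1))}"

definition RF :: "nat \<Rightarrow> nat \<Rightarrow> (nat \<Rightarrow> nat) set" where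
  "RF n s = {r \<in> Rset n s. \<forall>k\<in>{1..n}. k \<le> r k \<and> r k \<le> n}"

definition RE :: "nat \<Rightarrow> nat \<Rightarrow> (nat \<Rightarrow> nat) set" where
  "RE n s = {r \<in> Rset n s. \<forall>k\<in>{1..n}. 1 \<le> r k \<and> r k \<le> k}"

definition epsr :: "nat \<Rightarrow> (nat \<Rightarrow> nat) \<Rightarrow> iarr" where
  "epsr n r = (\<lambda>p q. \<Sum>k\<in>{1..n}. unitv k (r k) p q)"

definition alphar :: "nat \<Rightarrow> (nat \<Rightarrow> nat) \<Rightarrow> iarr" where
  "alphar n r = (\<lambda>p q. \<Sum>k\<in>{1..n}. alpha n k (r k) p q)"

definition Cfun :: "nat \<Rightarrow> carr \<Rightarrow> nat \<Rightarrow> (nat \<Rightarrow> nat) \<Rightarrow> complex" where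
  "Cfun n c s r = (let r0 = (\<lambda>k. if k = 0 then n else r k) in
      ent n c (s-1) (s-1) - ent n c n n + (\<Sum>k\<in>{1..n}. ent n c 1 k)
      + (\<Sum>k\<in>{1..s-1}. \<Sum>p\<in>{r0 (k+1)..r0 k - 1}. ent n c k p)
      - (\<Sum>k\<in>{1..s}. \<Sum>p\<in>{r0 k + 1..r0 (k-1)}. ent n c k p))"

definition Dfun :: "nat \<Rightarrow> carr \<Rightarrow> nat \<Rightarrow> (nat \<Rightarrow> nat) \<Rightarrow> complex" where
  "Dfun n c s r = - (\<Sum>k\<in>{n-s+2..n}. ent n c 1 k)
      - (\<Sum>k\<in>{s+1..n}. ent n c (r k - 1) (n-k+r k) - ent n c (r k) (n-k+r k))"

definition lamS :: "nat \<Rightarrow> (nat \<Rightarrow> complex) \<Rightarrow> nat \<Rightarrow> complex" where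
  "lamS n lam s = (\<Sum>k\<in>{1..s-1}. lam k) - (\<Sum>k\<in>{s+1..n}. lam k)"

end

theory Submission
  imports Defs
begin

(* Both E_{theta_n} and F_{theta_n} are nested q-commutators
   [X_n, [X_{n-1}, ..., X_1]_{q^-1} ...]_{q^-1}, q = eps, of operators with
   X_i v(m) = sum_j g_ij [Phi_ij(m)] v(m + d_ij).  The X_i interact only through the phases:
   the shift d_{i,y} lowers Phi_{i+1,x} by one iff y < x, the shift d_{i+1,x} lowers Phi_{i,y}
   by one iff x <= y, and rows at distance two or more do not interact.  Expanding the
   commutators gives a sum over tuples (j_1, ..., j_n) whose coefficients obey a two-term
   recursion in n.  By [z-1] - q^-1 [z] = -q^-z and [z] - q^-1 [z-1] = q^(z-1) the coefficient
   vanishes unless j weakly decreases up to some s and strictly increases afterwards (the index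
   sets R_s), and then it is prod_{i<s} q^(Phi_i - 1) * [Phi_s] * prod_{i>s} (-q^-Phi_i).
   Adding up the phases along such a tuple gives the exponents C and D. *)

definition vec_linear :: "(vec \<Rightarrow> vec) \<Rightarrow> bool" where
  "vec_linear T \<longleftrightarrow> (\<forall>u v. T (\<lambda>k. u k + v k) = (\<lambda>k. T u k + T v k)) \<and>
      (\<forall>c u. T (\<lambda>k. c * u k) = (\<lambda>k. c * T u k))"

lemma vec_linear_sum:
  assumes "vec_linear T" and "finite A"
  shows "T (\<lambda>k. \<Sum>x\<in>A. c x * v x k) = (\<lambda>k. \<Sum>x\<in>A. c x * T (v x) k)"
  using assms(2)
proof (induction A rule: finite_induct)
  case empty
  have "T (\<lambda>k. c * u k) = (\<lambda>k. c * T u k)" for c u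
    using assms(1) unfolding vec_linear_def by blast
  from this[of 0 "\<lambda>_. 0"] show ?case by simp
next
  case (insert x A)
  then show ?case using assms(1) unfolding vec_linear_def by simp
qed

lemma vec_linear_lin: "vec_linear (lin n l f)"
  unfolding vec_linear_def lin_def
  by (simp add: distrib_right sum.distrib sum_distrib_left mult.assoc)

lemma vec_linear_qcomm: "vec_linear U \<Longrightarrow> vec_linear V \<Longrightarrow> vec_linear (qcomm U V z)"
  unfolding vec_linear_def qcomm_def by (simp add: algebra_simps)

lemma finite_labels: "finite (labels n l)"
proof -
  let ?row = "{f::nat \<Rightarrow> int. \<forall>x. (x \<in> {1..n} \<longrightarrow> f x \<in> {0..<int l} \<union> {0}) \<and> (x \<notin> {1..n} \<longrightarrow> f x = 0)}"
  have "finite ?row" by (rule finite_set_of_finite_funs) auto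
  then have "finite {m. \<forall>x. (x \<in> {1..n} \<longrightarrow> m x \<in> ?row) \<and> (x \<notin> {1..n} \<longrightarrow> m x = (\<lambda>_. 0))}"
    by (intro finite_set_of_finite_funs) simp_all
  moreover have "labels n l \<subseteq> {m. \<forall>x. (x \<in> {1..n} \<longrightarrow> m x \<in> ?row) \<and> (x \<notin> {1..n} \<longrightarrow> m x = (\<lambda>_. 0))}"
    unfolding labels_def tri_def by (auto; metis atLeastAtMost_iff linorder_le_less_linear not_le)
  ultimately show ?thesis by (rule finite_subset[rotated])
qed

lemma lin_bv: "l > 0 \<Longrightarrow> lin n l f (bv n l m) = f (normlab n l m)"
proof -
  assume "l > 0"
  then have "normlab n l m \<in> labels n l" unfolding normlab_def labels_def by auto
  then show ?thesis unfolding lin_def bv_def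
    by (simp add: finite_labels if_distrib[of "\<lambda>x. x * _"] cong: if_cong)
qed

lemma bv_addi_normlab: "bv n l (addi (normlab n l m) d) = bv n l (addi m d)"
  unfolding bv_def normlab_def addi_def by (auto simp: fun_eq_iff mod_add_left_eq)

lemma addi_assoc: "addi (addi x y) z = addi x (addi y z)"
  unfolding addi_def by (simp add: fun_eq_iff add.assoc)

lemma addi_commute: "addi x y = addi y x"
  unfolding addi_def by (simp add: fun_eq_iff add.commute)

section \<open>Powers of eps and quantum numbers\<close>

lemma qpow_add: "qpow L (x + y) = qpow L x * qpow L y"
  unfolding qpow_def by (simp add: distrib_right exp_add)

lemma qpow_minus: "qpow L (- x) = inverse (qpow L x)"
  unfolding qpow_def by (simp add: exp_minus)

lemma qpow_diff_one: "qpow L (x - 1) = qpow L x / qpow L 1"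
  unfolding qpow_def by (simp add: left_diff_distrib exp_diff)

lemma qpow_nonzero: "qpow L x \<noteq> 0"
  unfolding qpow_def by simp

lemma prod_qpow: "finite A \<Longrightarrow> (\<Prod>i\<in>A. qpow L (f i)) = qpow L (\<Sum>i\<in>A. f i)"
  unfolding qpow_def by (simp add: sum_distrib_right exp_sum)

lemma qpow_int_period:
  assumes "exp L ^ l = 1"
  shows "qpow L (x + of_int t * of_nat l) = qpow L x"
proof -
  have "exp (of_int t * (of_nat l * L)) = 1"
    using assms by (simp add: exp_power_int[symmetric] exp_of_nat_mult)
  then show ?thesis unfolding qpow_def by (simp add: distrib_right exp_add mult.assoc)
qed

lemma qnum_int_period:
  assumes "exp L ^ l = 1"
  shows "qnum L (x + of_int t * of_nat l) = qnum L x"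
  using qpow_int_period[OF assms, of x t] qpow_int_period[OF assms, of "- x" "- t"]
  unfolding qnum_def by simp

lemma qnum_sub_qinv_mult_qnum:
  "qnum L x - qpow L (-1) * qnum L y
     = (qpow L x - qpow L (- x) - qpow L (y - 1) + qpow L (- y - 1)) / (qpow L 1 - qpow L (-1))"
proof -
  have "qpow L (-1) * (qpow L y - qpow L (- y)) = qpow L (y - 1) - qpow L (- y - 1)"
    unfolding qpow_diff_one qpow_minus
    using qpow_nonzero[of L y] qpow_nonzero[of L 1] by (simp add: field_simps)
  then show ?thesis
    unfolding qnum_def times_divide_eq_right diff_divide_distrib[symmetric] by (simp add: algebra_simps)
qed

lemma qnum_pred_sub:
  assumes "qpow L 1 \<noteq> qpow L (-1)"
  shows "qnum L (z - 1) - qpow L (-1) * qnum L z = - qpow L (- z)"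
proof -
  have "qpow L (z - 1) - qpow L (- (z - 1)) - qpow L (z - 1) + qpow L (- z - 1)
      = - qpow L (- z) * (qpow L 1 - qpow L (-1))"
    unfolding qpow_minus qpow_diff_one
    using qpow_nonzero[of L z] qpow_nonzero[of L 1] by (simp add: field_simps)
  then show ?thesis using assms unfolding qnum_sub_qinv_mult_qnum by simp
qed

lemma qnum_sub_pred:
  assumes "qpow L 1 \<noteq> qpow L (-1)"
  shows "qnum L z - qpow L (-1) * qnum L (z - 1) = qpow L (z - 1)"
proof -
  have "qpow L z - qpow L (- z) - qpow L (z - 1 - 1) + qpow L (- (z - 1) - 1)
      = qpow L (z - 1) * (qpow L 1 - qpow L (-1))"
    unfolding qpow_minus qpow_diff_one
    using qpow_nonzero[of L z] qpow_nonzero[of L 1] by (simp add: field_simps)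
  then show ?thesis using assms unfolding qnum_sub_qinv_mult_qnum by simp
qed

section \<open>Valley sequences\<close>

definition valley :: "nat \<Rightarrow> nat \<Rightarrow> (nat \<Rightarrow> nat) \<Rightarrow> bool" where
  "valley k s j \<longleftrightarrow> 1 \<le> s \<and> s \<le> k \<and> (\<forall>i. 1 \<le> i \<and> i < s \<longrightarrow> j (i+1) \<le> j i)
     \<and> (\<forall>i. s \<le> i \<and> i < k \<longrightarrow> j i < j (i+1))"

lemma valley_unique: "valley k s j \<Longrightarrow> valley k s' j \<Longrightarrow> s = s'"
  unfolding valley_def by (metis Suc_eq_plus1 leD le_less less_Suc_eq_le linorder_neqE_nat order_trans)

lemma valley_one_iff: "valley (Suc 0) s j \<longleftrightarrow> s = 1"
  unfolding valley_def by auto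

lemma valley_Suc_below: "valley (Suc K) s j \<Longrightarrow> s \<le> K \<Longrightarrow> valley K s j \<and> j K < j (Suc K)"
  unfolding valley_def by auto

lemma valley_Suc_top: "valley (Suc K) (Suc K) j \<Longrightarrow> 1 \<le> K \<Longrightarrow> valley K K j \<and> j (Suc K) \<le> j K"
  unfolding valley_def by auto

lemma valley_extend_top: "valley K K j \<Longrightarrow> j (Suc K) \<le> j K \<Longrightarrow> valley (Suc K) (Suc K) j"
  unfolding valley_def by (auto simp: less_Suc_eq)

lemma valley_extend: "valley K s j \<Longrightarrow> j K < j (Suc K) \<Longrightarrow> valley (Suc K) s j"
  unfolding valley_def by (auto simp: less_Suc_eq)

definition valley_coeff :: "complex \<Rightarrow> nat \<Rightarrow> nat \<Rightarrow> (nat \<Rightarrow> complex) \<Rightarrow> complex" where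
  "valley_coeff L k s \<phi> = (\<Prod>i\<in>{1..<s}. qpow L (\<phi> i - 1)) * qnum L (\<phi> s)
      * (\<Prod>i\<in>{s<..k}. - qpow L (- \<phi> i))"

lemma valley_coeff_cong:
  "1 \<le> s \<Longrightarrow> s \<le> k \<Longrightarrow> (\<forall>i\<in>{1..k}. \<phi> i = \<psi> i) \<Longrightarrow>
   valley_coeff L k s \<phi> = valley_coeff L k s \<psi>"
  unfolding valley_coeff_def by (auto intro!: prod.cong arg_cong2[where f = "(*)"])

lemma valley_coeff_Suc:
  "s \<le> K \<Longrightarrow> valley_coeff L (Suc K) s \<phi> = valley_coeff L K s \<phi> * - qpow L (- \<phi> (Suc K))"
proof -
  assume "s \<le> K"
  then have "{s<..Suc K} = insert (Suc K) {s<..K}" by auto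
  then show ?thesis unfolding valley_coeff_def by simp
qed

lemma valley_coeff_Suc_top:
  "1 \<le> K \<Longrightarrow> valley_coeff L (Suc K) (Suc K) \<phi>
     = (\<Prod>i\<in>{1..<K}. qpow L (\<phi> i - 1)) * qpow L (\<phi> K - 1) * qnum L (\<phi> (Suc K))"
  unfolding valley_coeff_def by (simp add: prod.atLeastLessThan_Suc)

lemma valley_coeff_closed:
  assumes "1 \<le> s" "s \<le> k"
  shows "valley_coeff L k s \<phi> = (-1) ^ (k - s)
     * qpow L ((\<Sum>i\<in>{1..<s}. \<phi> i - 1) - (\<Sum>i\<in>{s<..k}. \<phi> i)) * qnum L (\<phi> s)"
proof -
  have "(\<Prod>i\<in>{s<..k}. - qpow L (- \<phi> i)) = (\<Prod>i\<in>{s<..k}. -1 * qpow L (- \<phi> i))"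
    by simp
  also have "\<dots> = (\<Prod>i\<in>{s<..k}. -1) * (\<Prod>i\<in>{s<..k}. qpow L (- \<phi> i))"
    by (rule prod.distrib)
  also have "\<dots> = (-1) ^ (k - s) * qpow L (- (\<Sum>i\<in>{s<..k}. \<phi> i))"
    by (simp add: prod_qpow sum_negf)
  finally have "(\<Prod>i\<in>{s<..k}. - qpow L (- \<phi> i)) = (-1) ^ (k - s) * qpow L (- (\<Sum>i\<in>{s<..k}. \<phi> i))" .
  moreover have "qpow L (x - y) = qpow L x * qpow L (- y)" for x y
    using qpow_add[of L x "- y"] by simp
  ultimately show ?thesis
    unfolding valley_coeff_def prod_qpow[OF finite_atLeastLessThan] by (simp add: algebra_simps)
qed

section \<open>Expansion of nested q-commutators\<close>

definition tuples :: "(nat \<Rightarrow> nat set) \<Rightarrow> nat \<Rightarrow> (nat \<Rightarrow> nat) set" where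
  "tuples J k = {j. (\<forall>i\<in>{1..k}. j i \<in> J i) \<and> (\<forall>i. i \<notin> {1..k} \<longrightarrow> j i = 0)}"

lemma finite_tuples: "(\<And>i. finite (J i)) \<Longrightarrow> finite (tuples J k)"
proof -
  assume fin: "\<And>i. finite (J i)"
  have "tuples J k \<subseteq> {j. \<forall>x. (x \<in> {1..k} \<longrightarrow> j x \<in> \<Union>(J ` {1..k})) \<and> (x \<notin> {1..k} \<longrightarrow> j x = 0)}"
    unfolding tuples_def by blast
  moreover have "finite {j. \<forall>x. (x \<in> {1..k} \<longrightarrow> j x \<in> \<Union>(J ` {1..k})) \<and> (x \<notin> {1..k} \<longrightarrow> j x = 0)}"
    by (rule finite_set_of_finite_funs) (auto simp: fin)
  ultimately show ?thesis by (rule finite_subset)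
qed

lemma tuples_0: "tuples J 0 = {\<lambda>_. 0}"
  unfolding tuples_def by auto

lemma sum_tuples_Suc:
  "(\<Sum>j\<in>tuples J (Suc k). F j) = (\<Sum>j\<in>tuples J k. \<Sum>x\<in>J (Suc k). F (j(Suc k := x)))"
proof -
  have "(\<Sum>j\<in>tuples J k. \<Sum>x\<in>J (Suc k). F (j(Suc k := x)))
      = (\<Sum>p\<in>tuples J k \<times> J (Suc k). F ((fst p)(Suc k := snd p)))"
    by (simp add: sum.cartesian_product case_prod_beta)
  also have "\<dots> = (\<Sum>j\<in>tuples J (Suc k). F j)"
    by (rule sum.reindex_bij_witness[where i = "\<lambda>j. (j(Suc k := 0), j (Suc k))"
          and j = "\<lambda>p. (fst p)(Suc k := snd p)"])
      (auto simp: tuples_def fun_eq_iff)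
  finally show ?thesis by simp
qed

definition shift_sum :: "(nat \<Rightarrow> nat \<Rightarrow> iarr) \<Rightarrow> nat \<Rightarrow> (nat \<Rightarrow> nat) \<Rightarrow> iarr" where
  "shift_sum d k j = (\<lambda>p q. \<Sum>i\<in>{1..k}. d i (j i) p q)"

lemma shift_sum_0: "addi m (shift_sum d 0 j) = m"
  unfolding shift_sum_def addi_def by simp

lemma shift_sum_Suc: "shift_sum d (Suc k) j = addi (shift_sum d k j) (d (Suc k) (j (Suc k)))"
  unfolding shift_sum_def addi_def by (simp add: fun_eq_iff)

lemma shift_sum_cong: "(\<forall>i\<in>{1..k}. j i = j' i) \<Longrightarrow> shift_sum d k j = shift_sum d k j'"
  unfolding shift_sum_def by (simp add: fun_eq_iff)

locale nested_qcommutator =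
  fixes n l :: nat and L :: complex
    and X Th :: "nat \<Rightarrow> vec \<Rightarrow> vec"
    and J :: "nat \<Rightarrow> nat set" and g :: "nat \<Rightarrow> nat \<Rightarrow> complex"
    and Phi :: "nat \<Rightarrow> nat \<Rightarrow> iarr \<Rightarrow> complex" and d :: "nat \<Rightarrow> nat \<Rightarrow> iarr"
  assumes finite_J: "\<And>i. finite (J i)"
    and X_linear: "\<And>i. vec_linear (X i)"
    and X_bv: "\<And>i m. 1 \<le> i \<Longrightarrow> i \<le> n \<Longrightarrow> X i (bv n l m) =
        (\<lambda>v. \<Sum>j\<in>J i. g i j * qnum L (Phi i j m) * bv n l (addi m (d i j)) v)"
    and Th_one: "Th (Suc 0) = X (Suc 0)"
    and Th_Suc: "\<And>k. Th (Suc (Suc k)) = qcomm (X (Suc (Suc k))) (Th (Suc k)) (qpow L (-1))"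
    and Phi_shift_prev: "\<And>k x y m. 1 \<le> k \<Longrightarrow> k + 1 \<le> n \<Longrightarrow> y \<in> J k \<Longrightarrow> x \<in> J (k+1) \<Longrightarrow>
        Phi (k+1) x (addi m (d k y)) = Phi (k+1) x m - (if y < x then 1 else 0)"
    and Phi_shift_next: "\<And>k x y m. 1 \<le> k \<Longrightarrow> k + 1 \<le> n \<Longrightarrow> y \<in> J k \<Longrightarrow> x \<in> J (k+1) \<Longrightarrow>
        Phi k y (addi m (d (k+1) x)) = Phi k y m - (if x \<le> y then 1 else 0)"
    and Phi_shift_far: "\<And>i i' x y m. 1 \<le> i \<Longrightarrow> i \<le> n \<Longrightarrow> 1 \<le> i' \<Longrightarrow> i' \<le> n \<Longrightarrow>
        i + 2 \<le> i' \<or> i' + 2 \<le> i \<Longrightarrow> y \<in> J i \<Longrightarrow> x \<in> J i' \<Longrightarrow>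
        Phi i y (addi m (d i' x)) = Phi i y m"
    and q_ne_qinv: "qpow L 1 \<noteq> qpow L (-1)"
begin

lemma Th_linear: "1 \<le> k \<Longrightarrow> vec_linear (Th k)"
proof (induction k rule: nat_induct_at_least)
  case base
  then show ?case using Th_one X_linear by simp
next
  case (Suc k)
  then show ?case using Th_Suc X_linear vec_linear_qcomm by (cases k) auto
qed

(* In X_{k+2} (Th_{k+1} v(m)) the phase of X_{k+2} is taken at m + d_{1,j_1} + ... + d_{k+1,j_{k+1}},
   and only the last shift changes it (Phi_shift_sum below). *)
fun coeff :: "nat \<Rightarrow> iarr \<Rightarrow> (nat \<Rightarrow> nat) \<Rightarrow> complex" where
  "coeff 0 m j = 0"
| "coeff (Suc 0) m j = qnum L (Phi 1 (j 1) m)"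
| "coeff (Suc (Suc k)) m j =
     coeff (Suc k) m j * qnum L (Phi (Suc (Suc k)) (j (Suc (Suc k))) m
          - (if j (Suc k) < j (Suc (Suc k)) then 1 else 0))
     - qpow L (-1) * qnum L (Phi (Suc (Suc k)) (j (Suc (Suc k))) m)
          * coeff (Suc k) (addi m (d (Suc (Suc k)) (j (Suc (Suc k))))) j"

lemma coeff_cong: "(\<forall>i\<in>{1..k}. j i = j' i) \<Longrightarrow> coeff k m j = coeff k m j'"
proof (induction k m j rule: coeff.induct)
  case (3 k m j)
  then have "j (Suc k) = j' (Suc k)" "j (Suc (Suc k)) = j' (Suc (Suc k))" by auto
  then show ?case using "3.IH" "3.prems" by (simp only: coeff.simps) auto
qed auto

lemma coeff_Suc_upd:
  "1 \<le> K \<Longrightarrow> coeff (Suc K) m (j(Suc K := x)) =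
     coeff K m j * qnum L (Phi (Suc K) x m - (if j K < x then 1 else 0))
     - qpow L (-1) * qnum L (Phi (Suc K) x m) * coeff K (addi m (d (Suc K) x)) j"
proof -
  assume "1 \<le> K"
  moreover have "coeff K m' (j(Suc K := x)) = coeff K m' j" for m'
    by (rule coeff_cong) simp
  ultimately show ?thesis by (cases K) auto
qed

lemma Phi_shift_sum:
  assumes "p \<le> K" "1 \<le> K" "K + 1 \<le> n" "j \<in> tuples J K" "x \<in> J (K+1)"
  shows "Phi (K+1) x (addi m (shift_sum d p j)) = Phi (K+1) x m - (if p = K \<and> j K < x then 1 else 0)"
  using assms(1)
proof (induction p)
  case 0
  then show ?case using assms(2) by (simp add: shift_sum_0)
next
  case (Suc p)
  have j: "j (Suc p) \<in> J (Suc p)" using assms(4) Suc.prems unfolding tuples_def by auto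
  have "Phi (K+1) x (addi m (shift_sum d (Suc p) j))
      = Phi (K+1) x (addi (addi m (shift_sum d p j)) (d (Suc p) (j (Suc p))))"
    by (simp add: shift_sum_Suc addi_assoc)
  also have "\<dots> = Phi (K+1) x (addi m (shift_sum d p j)) - (if Suc p = K \<and> j K < x then 1 else 0)"
    using Phi_shift_prev[of K "j K" x] Phi_shift_far[of "K+1" "Suc p" x "j (Suc p)"] assms Suc.prems j
    by (cases "Suc p = K") auto
  finally show ?case using Suc by simp
qed


lemma expansion_term_Suc:
  assumes "1 \<le> K" "Suc K \<le> n" "j \<in> tuples J K" "x \<in> J (Suc K)"
  shows "(\<Prod>i\<in>{1..Suc K}. g i ((j(Suc K := x)) i)) * coeff (Suc K) m (j(Suc K := x))
           * bv n l (addi m (shift_sum d (Suc K) (j(Suc K := x)))) v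
       = (\<Prod>i\<in>{1..K}. g i (j i)) * coeff K m j
           * (g (Suc K) x * qnum L (Phi (Suc K) x (addi m (shift_sum d K j)))
              * bv n l (addi (addi m (shift_sum d K j)) (d (Suc K) x)) v)
         - qpow L (-1) * (g (Suc K) x * qnum L (Phi (Suc K) x m)
              * ((\<Prod>i\<in>{1..K}. g i (j i)) * coeff K (addi m (d (Suc K) x)) j
                 * bv n l (addi (addi m (d (Suc K) x)) (shift_sum d K j)) v))"
proof -
  have G: "(\<Prod>i\<in>{1..Suc K}. g i ((j(Suc K := x)) i)) = (\<Prod>i\<in>{1..K}. g i (j i)) * g (Suc K) x"
    by (simp add: prod.cl_ivl_Suc)
  have S: "shift_sum d (Suc K) (j(Suc K := x)) = addi (shift_sum d K j) (d (Suc K) x)"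
    using shift_sum_Suc[of d K "j(Suc K := x)"] shift_sum_cong[of K "j(Suc K := x)" j d] by simp
  have P: "Phi (Suc K) x (addi m (shift_sum d K j)) = Phi (Suc K) x m - (if j K < x then 1 else 0)"
    using Phi_shift_sum[of K K j x m] assms by simp
  have D: "addi (addi m (d (Suc K) x)) (shift_sum d K j) = addi m (shift_sum d (Suc K) (j(Suc K := x)))"
    unfolding S by (metis addi_assoc addi_commute)
  show ?thesis
    unfolding coeff_Suc_upd[OF assms(1)] G P D unfolding S addi_assoc by (simp add: algebra_simps)
qed

lemma Th_bv_tuples:
  "1 \<le> k \<Longrightarrow> k \<le> n \<Longrightarrow> Th k (bv n l m) = (\<lambda>v. \<Sum>j\<in>tuples J k.
     (\<Prod>i\<in>{1..k}. g i (j i)) * coeff k m j * bv n l (addi m (shift_sum d k j)) v)"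
proof (induction k arbitrary: m rule: nat_induct_at_least)
  case base
  have "shift_sum d (Suc 0) ((\<lambda>_. 0)(Suc 0 := x)) = d 1 x" for x
    unfolding shift_sum_def by simp
  then show ?case using base by (simp add: Th_one X_bv sum_tuples_Suc tuples_0)
next
  case (Suc K)
  note IH = Suc.IH[OF Suc_leD[OF Suc.prems]]
  let ?G = "\<lambda>j. \<Prod>i\<in>{1..K}. g i (j i)"
  have A: "X (Suc K) (Th K (bv n l m)) = (\<lambda>v. \<Sum>j\<in>tuples J K. ?G j * coeff K m j *
      (\<Sum>x\<in>J (Suc K). g (Suc K) x * qnum L (Phi (Suc K) x (addi m (shift_sum d K j)))
        * bv n l (addi (addi m (shift_sum d K j)) (d (Suc K) x)) v))"
    unfolding IH using vec_linear_sum[OF X_linear finite_tuples[OF finite_J]] X_bv[OF _ Suc.prems]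
    by simp
  have B: "Th K (X (Suc K) (bv n l m)) = (\<lambda>v. \<Sum>x\<in>J (Suc K). g (Suc K) x * qnum L (Phi (Suc K) x m) *
      (\<Sum>j\<in>tuples J K. ?G j * coeff K (addi m (d (Suc K) x)) j
        * bv n l (addi (addi m (d (Suc K) x)) (shift_sum d K j)) v))"
    unfolding X_bv[OF _ Suc.prems, simplified] IH
    using vec_linear_sum[OF Th_linear[OF Suc.hyps] finite_J] by (simp add: IH)
  have "Th (Suc K) (bv n l m) = (\<lambda>v. X (Suc K) (Th K (bv n l m)) v - qpow L (-1) * Th K (X (Suc K) (bv n l m)) v)"
    using Suc.hyps Th_Suc by (cases K) (simp_all add: qcomm_def)
  also have "\<dots> = (\<lambda>v. \<Sum>j\<in>tuples J K. \<Sum>x\<in>J (Suc K).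
      ?G j * coeff K m j
        * (g (Suc K) x * qnum L (Phi (Suc K) x (addi m (shift_sum d K j)))
           * bv n l (addi (addi m (shift_sum d K j)) (d (Suc K) x)) v)
      - qpow L (-1) * (g (Suc K) x * qnum L (Phi (Suc K) x m)
           * (?G j * coeff K (addi m (d (Suc K) x)) j
              * bv n l (addi (addi m (d (Suc K) x)) (shift_sum d K j)) v)))"
    unfolding A B by (simp add: sum_subtractf sum_distrib_left sum.swap[of _ "J (Suc K)"])
  also have "\<dots> = (\<lambda>v. \<Sum>j\<in>tuples J K. \<Sum>x\<in>J (Suc K).
      (\<Prod>i\<in>{1..Suc K}. g i ((j(Suc K := x)) i)) * coeff (Suc K) m (j(Suc K := x))
        * bv n l (addi m (shift_sum d (Suc K) (j(Suc K := x)))) v)"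
    by (intro ext sum.cong refl, rule expansion_term_Suc[symmetric]) (use Suc in auto)
  finally show ?case by (simp add: sum_tuples_Suc)
qed


definition phases :: "iarr \<Rightarrow> (nat \<Rightarrow> nat) \<Rightarrow> nat \<Rightarrow> complex" where
  "phases m j i = Phi i (j i) m"

lemma coeff_Suc:
  "1 \<le> K \<Longrightarrow> coeff (Suc K) m j =
     coeff K m j * qnum L (phases m j (Suc K) - (if j K < j (Suc K) then 1 else 0))
     - qpow L (-1) * qnum L (phases m j (Suc K)) * coeff K (addi m (d (Suc K) (j (Suc K)))) j"
  unfolding phases_def by (cases K) auto

lemma phases_shift:
  assumes "1 \<le> K" "Suc K \<le> n" "\<forall>i\<in>{1..Suc K}. j i \<in> J i" "i \<in> {1..K}"
  shows "phases (addi m (d (Suc K) (j (Suc K)))) j i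
       = phases m j i - (if i = K \<and> j (Suc K) \<le> j K then 1 else 0)"
  using assms Phi_shift_next[of K "j K" "j (Suc K)" m] Phi_shift_far[of i "Suc K" "j i" "j (Suc K)" m]
  unfolding phases_def by (cases "i = K") auto

lemma coeff_Suc_extend:
  assumes K: "1 \<le> K" "Suc K \<le> n" and j: "\<forall>i\<in>{1..Suc K}. j i \<in> J i"
    and v: "valley K s j" "j K < j (Suc K)"
    and IH: "\<And>m. coeff K m j = valley_coeff L K s (phases m j)"
  shows "coeff (Suc K) m j = valley_coeff L (Suc K) s (phases m j)"
proof -
  let ?m' = "addi m (d (Suc K) (j (Suc K)))"
  have s: "1 \<le> s" "s \<le> K" using v(1) unfolding valley_def by auto
  have "coeff K ?m' j = valley_coeff L K s (phases m j)"
    unfolding IH using phases_shift[OF K j] v(2) by (intro valley_coeff_cong[OF s]) auto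
  then have "coeff (Suc K) m j = valley_coeff L K s (phases m j)
      * (qnum L (phases m j (Suc K) - 1) - qpow L (-1) * qnum L (phases m j (Suc K)))"
    unfolding coeff_Suc[OF K(1)] IH using v(2) by (simp add: algebra_simps)
  then show ?thesis
    unfolding qnum_pred_sub[OF q_ne_qinv] valley_coeff_Suc[OF s(2)] .
qed

lemma coeff_Suc_top:
  assumes K: "1 \<le> K" "Suc K \<le> n" and j: "\<forall>i\<in>{1..Suc K}. j i \<in> J i"
    and v: "valley K K j" "j (Suc K) \<le> j K"
    and IH: "\<And>m. coeff K m j = valley_coeff L K K (phases m j)"
  shows "coeff (Suc K) m j = valley_coeff L (Suc K) (Suc K) (phases m j)"
proof -
  let ?m' = "addi m (d (Suc K) (j (Suc K)))"
  let ?P = "\<Prod>i\<in>{1..<K}. qpow L (phases m j i - 1)"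
  have "(\<Prod>i\<in>{1..<K}. qpow L (phases ?m' j i - 1)) = ?P"
    using phases_shift[OF K j] by (intro prod.cong) auto
  moreover have "phases ?m' j K = phases m j K - 1"
    using phases_shift[OF K j] v(2) K by simp
  ultimately have "coeff K ?m' j = ?P * qnum L (phases m j K - 1)"
    unfolding IH valley_coeff_def by simp
  then have "coeff (Suc K) m j = ?P * qnum L (phases m j (Suc K))
      * (qnum L (phases m j K) - qpow L (-1) * qnum L (phases m j K - 1))"
    unfolding coeff_Suc[OF K(1)] IH valley_coeff_def using v(2) by (simp add: algebra_simps)
  then show ?thesis
    unfolding qnum_sub_pred[OF q_ne_qinv] valley_coeff_Suc_top[OF K(1)] by (simp add: algebra_simps)
qed

lemma coeff_Suc_nonvalley:
  assumes K: "1 \<le> K" "Suc K \<le> n" and j: "\<forall>i\<in>{1..Suc K}. j i \<in> J i"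
    and nv: "\<forall>s. \<not> valley (Suc K) s j"
    and IH_valley: "\<And>s m. valley K s j \<Longrightarrow> coeff K m j = valley_coeff L K s (phases m j)"
    and IH_nonvalley: "\<And>m. \<forall>s. \<not> valley K s j \<Longrightarrow> coeff K m j = 0"
  shows "coeff (Suc K) m j = 0"
proof (cases "\<exists>s. valley K s j")
  case False
  then show ?thesis unfolding coeff_Suc[OF K(1)] using IH_nonvalley by simp
next
  case True
  then obtain s where v: "valley K s j" by blast
  let ?m' = "addi m (d (Suc K) (j (Suc K)))"
  have le: "j (Suc K) \<le> j K" using valley_extend[OF v] nv by (meson not_le)
  have "s \<noteq> K" using valley_extend_top[of K j] v le nv by blast
  then obtain K' where K': "K = Suc K'" "s \<le> K'" using v unfolding valley_def
    by (metis Suc_le_D le_antisym not_less_eq_eq)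
  have cK: "coeff K m' j = valley_coeff L K' s (phases m' j) * - qpow L (- phases m' j K)" for m'
    using IH_valley[OF v] valley_coeff_Suc[OF K'(2)] K'(1) by simp
  have head: "valley_coeff L K' s (phases ?m' j) = valley_coeff L K' s (phases m j)"
    using v phases_shift[OF K j] K' unfolding valley_def by (intro valley_coeff_cong) auto
  have last: "phases ?m' j K = phases m j K - 1" using phases_shift[OF K j] le K by simp
  have "coeff (Suc K) m j = valley_coeff L K' s (phases m j) * qnum L (phases m j (Suc K))
      * (- qpow L (- phases m j K) + qpow L (-1) * qpow L (- (phases m j K - 1)))"
    unfolding coeff_Suc[OF K(1)] cK head last using le by (simp add: algebra_simps)
  also have "qpow L (-1) * qpow L (- (phases m j K - 1)) = qpow L (- phases m j K)"
    unfolding qpow_add[symmetric] by simp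
  finally show ?thesis by simp
qed


lemma coeff_eval:
  assumes "1 \<le> k" "k \<le> n" "\<forall>i\<in>{1..k}. j i \<in> J i"
  shows "(valley k s j \<longrightarrow> coeff k m j = valley_coeff L k s (phases m j))
       \<and> ((\<forall>s. \<not> valley k s j) \<longrightarrow> coeff k m j = 0)"
  using assms
proof (induction k arbitrary: m s rule: nat_induct_at_least)
  case base
  then show ?case by (simp add: valley_one_iff valley_coeff_def phases_def)
next
  case (Suc K)
  have K: "1 \<le> K" "Suc K \<le> n" using Suc by auto
  have IH1: "coeff K m' j = valley_coeff L K s' (phases m' j)" if "valley K s' j" for m' s'
    using Suc.IH[of s' m'] Suc.prems that by auto
  have IH0: "coeff K m' j = 0" if "\<forall>s. \<not> valley K s j" for m'
    using Suc.IH[of _ m'] Suc.prems that by auto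
  show ?case
  proof (intro conjI impI)
    assume v: "valley (Suc K) s j"
    show "coeff (Suc K) m j = valley_coeff L (Suc K) s (phases m j)"
    proof (cases "s \<le> K")
      case True
      then show ?thesis
        using valley_Suc_below[OF v True] coeff_Suc_extend[OF K Suc.prems(2)] IH1 by blast
    next
      case False
      then have "s = Suc K" using v unfolding valley_def by simp
      then show ?thesis
        using valley_Suc_top[OF _ K(1)] v coeff_Suc_top[OF K Suc.prems(2)] IH1 by blast
    qed
  next
    assume "\<forall>s. \<not> valley (Suc K) s j"
    then show "coeff (Suc K) m j = 0"
      using coeff_Suc_nonvalley[OF K Suc.prems(2)] IH1 IH0 by blast
  qed
qed

lemma Th_bv_valleys:
  assumes "1 \<le> n"
  shows "Th n (bv n l m) = (\<lambda>v. \<Sum>s\<in>{1..n}. \<Sum>j\<in>{j\<in>tuples J n. valley n s j}.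
     (\<Prod>i\<in>{1..n}. g i (j i)) * valley_coeff L n s (phases m j) * bv n l (addi m (shift_sum d n j)) v)"
proof
  fix v
  let ?f = "\<lambda>j. (\<Prod>i\<in>{1..n}. g i (j i)) * coeff n m j * bv n l (addi m (shift_sum d n j)) v"
  let ?V = "\<lambda>s. {j\<in>tuples J n. valley n s j}"
  have eval: "\<forall>i\<in>{1..n}. j i \<in> J i" if "j \<in> tuples J n" for j
    using that unfolding tuples_def by auto
  have "Th n (bv n l m) v = (\<Sum>j\<in>tuples J n. ?f j)"
    using Th_bv_tuples[OF assms order_refl] by simp
  also have "\<dots> = (\<Sum>j\<in>(\<Union>s\<in>{1..n}. ?V s). ?f j)"
    using coeff_eval[OF assms order_refl eval] unfolding valley_def
    by (intro sum.mono_neutral_right[OF finite_tuples[OF finite_J]]) auto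
  also have "\<dots> = (\<Sum>s\<in>{1..n}. \<Sum>j\<in>?V s. ?f j)"
    by (rule sum.UNION_disjoint) (auto simp: finite_tuples finite_J dest: valley_unique)
  also have "\<dots> = (\<Sum>s\<in>{1..n}. \<Sum>j\<in>?V s.
      (\<Prod>i\<in>{1..n}. g i (j i)) * valley_coeff L n s (phases m j) * bv n l (addi m (shift_sum d n j)) v)"
    using coeff_eval[OF assms order_refl eval] by (intro sum.cong refl) auto
  finally show "Th n (bv n l m) v = \<dots>" .
qed

end

section \<open>The operators E_i and F_i\<close>

lemma sum_indicator_unique:
  assumes "finite A" "\<And>k. k \<in> A \<Longrightarrow> Q k \<longleftrightarrow> k = b \<and> P"
  shows "(\<Sum>k\<in>A. if Q k then (1::'a::{comm_monoid_add,one}) else 0) = (if b \<in> A \<and> P then 1 else 0)"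
proof -
  have "(\<Sum>k\<in>A. if Q k then (1::'a) else 0) = (\<Sum>k\<in>A. if k = b then (if P then 1 else 0) else 0)"
    using assms(2) by (intro sum.cong) auto
  then show ?thesis using assms(1) by (simp add: sum.delta)
qed

lemma ent_add: "ent n (\<lambda>p q. c p q + c' p q) i j = ent n c i j + ent n c' i j"
  unfolding ent_def by simp

lemma ent_scale: "ent n (\<lambda>p q. x * c p q) i j = x * ent n c i j"
  unfolding ent_def by simp

lemma ent_cong: "(\<forall>p q. tri n p q \<longrightarrow> c p q = c' p q) \<Longrightarrow> ent n c i j = ent n c' i j"
  unfolding ent_def by simp

lemma ent_of_int_Ints: "ent n (\<lambda>p q. of_int (t p q)) i j \<in> \<int>"
  unfolding ent_def by simp

lemma Mfun_add: "Mfun n (\<lambda>p q. c p q + c' p q) i j = Mfun n c i j + Mfun n c' i j"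
proof -
  have e: "(x + x') - (y + y') = (x - y) + (x' - y')" for x x' y y' :: complex by simp
  show ?thesis unfolding Mfun_def ent_add e sum.distrib by simp
qed

lemma Mfun_scale: "Mfun n (\<lambda>p q. x * c p q) i j = x * Mfun n c i j"
  unfolding Mfun_def ent_scale by (simp add: sum_distrib_left algebra_simps)

lemma Mfun_cong: "(\<forall>p q. tri n p q \<longrightarrow> c p q = c' p q) \<Longrightarrow> Mfun n c i j = Mfun n c' i j"
  unfolding Mfun_def using ent_cong[of n c c'] by simp

lemma Mfun_of_int_Ints: "Mfun n (\<lambda>p q. of_int (t p q)) i j \<in> \<int>"
  unfolding Mfun_def by (intro Ints_add Ints_sum Ints_diff ent_of_int_Ints)

lemma Nfun_add: "Nfun n (\<lambda>p q. c p q + c' p q) i j = Nfun n c i j + Nfun n c' i j"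
  unfolding Nfun_def ent_add by (simp add: algebra_simps)

lemma Nfun_scale: "Nfun n (\<lambda>p q. x * c p q) i j = x * Nfun n c i j"
  unfolding Nfun_def ent_scale by (simp add: algebra_simps)

lemma Nfun_cong: "(\<forall>p q. tri n p q \<longrightarrow> c p q = c' p q) \<Longrightarrow> Nfun n c i j = Nfun n c' i j"
  unfolding Nfun_def using ent_cong[of n c c'] by simp

lemma Nfun_of_int_Ints: "Nfun n (\<lambda>p q. of_int (t p q)) i j \<in> \<int>"
  unfolding Nfun_def by (intro Ints_diff ent_of_int_Ints)

lemma shiftc_addi: "shiftc (addi m t) b = (\<lambda>p q. shiftc m b p q + of_int (t p q))"
  unfolding shiftc_def addi_def by (simp add: fun_eq_iff)

lemma shiftc_normlab:
  "tri n p q \<Longrightarrow> shiftc m b p q = shiftc (normlab n l m) b p q + of_nat l * of_int (m p q div int l)"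
proof -
  assume "tri n p q"
  moreover have "(of_int (m p q) :: complex) = of_int (m p q mod int l) + of_nat l * of_int (m p q div int l)"
    by (metis minus_mod_eq_mult_div add.commute diff_add_cancel mult.commute of_int_add of_int_mult of_int_of_nat_eq)
  ultimately show ?thesis unfolding shiftc_def normlab_def by simp
qed

lemma qnum_Mfun_normlab:
  assumes "exp L ^ l = 1"
  shows "qnum L (Mfun n (shiftc (normlab n l m) b) i j - z) = qnum L (Mfun n (shiftc m b) i j - z)"
proof -
  have "Mfun n (shiftc m b) i j
      = Mfun n (\<lambda>p q. shiftc (normlab n l m) b p q + of_nat l * of_int (m p q div int l)) i j"
    by (rule Mfun_cong) (simp add: shiftc_normlab)
  also have "\<dots> = Mfun n (shiftc (normlab n l m) b) i j + of_nat l * Mfun n (\<lambda>p q. of_int (m p q div int l)) i j"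
    by (simp add: Mfun_add Mfun_scale)
  finally obtain t where "Mfun n (shiftc m b) i j = Mfun n (shiftc (normlab n l m) b) i j + of_int t * of_nat l"
    using Mfun_of_int_Ints[of n "\<lambda>p q. m p q div int l" i j] by (metis Ints_cases mult.commute)
  then show ?thesis
    using qnum_int_period[OF assms, of "Mfun n (shiftc (normlab n l m) b) i j - z" t]
    by (simp add: algebra_simps)
qed

lemma qnum_Nfun_normlab:
  assumes "exp L ^ l = 1"
  shows "qnum L (Nfun n (shiftc (normlab n l m) b) i j) = qnum L (Nfun n (shiftc m b) i j)"
proof -
  have "Nfun n (shiftc m b) i j
      = Nfun n (\<lambda>p q. shiftc (normlab n l m) b p q + of_nat l * of_int (m p q div int l)) i j"
    by (rule Nfun_cong) (simp add: shiftc_normlab)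
  also have "\<dots> = Nfun n (shiftc (normlab n l m) b) i j + of_nat l * Nfun n (\<lambda>p q. of_int (m p q div int l)) i j"
    by (simp add: Nfun_add Nfun_scale)
  finally obtain t where "Nfun n (shiftc m b) i j = Nfun n (shiftc (normlab n l m) b) i j + of_int t * of_nat l"
    using Nfun_of_int_Ints[of n "\<lambda>p q. m p q div int l" i j] by (metis Ints_cases mult.commute)
  then show ?thesis using qnum_int_period[OF assms] by simp
qed

lemma sum_ent_unitv:
  "finite A \<Longrightarrow> (\<Sum>p\<in>A. ent n (\<lambda>p q. of_int (unitv a c p q)) r p)
     = (if c \<in> A \<and> r = a \<and> tri n a c then 1 else 0)"
proof -
  assume fin: "finite A"
  have e: "ent n (\<lambda>p q. of_int (unitv a c p q)) r p
      = (if p = c \<and> r = a \<and> tri n a c then 1 else 0)" for p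
    unfolding ent_def unitv_def by auto
  show ?thesis unfolding e by (rule sum_indicator_unique[OF fin]) simp
qed

lemma Mfun_unitv: "Mfun n (\<lambda>p q. of_int (unitv a c p q)) i j =
   (if c \<in> {i-1..j-1} \<and> i = a \<and> tri n a c then 1 else 0)
 - (if c \<in> {i-1..j-1} \<and> i - 1 = a \<and> tri n a c then 1 else 0)
 + ((if c \<in> {i..j} \<and> i = a \<and> tri n a c then 1 else 0)
 - (if c \<in> {i..j} \<and> i + 1 = a \<and> tri n a c then 1 else 0))"
  unfolding Mfun_def sum_subtractf by (simp only: sum_ent_unitv finite_atLeastAtMost)

lemma Mfun_unitv_prev_row:
  assumes "1 \<le> k" "k + 1 \<le> n" "y \<in> {k..n}" "k + 1 \<le> x"
  shows "Mfun n (\<lambda>p q. of_int (unitv k y p q)) (k+1) x = - (if y < x then 1 else 0)"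
proof -
  have "tri n k y" "y \<in> {k+1-1..x-1} \<longleftrightarrow> y < x" using assms unfolding tri_def by auto
  then show ?thesis unfolding Mfun_unitv by simp
qed

lemma Mfun_unitv_next_row:
  assumes "1 \<le> k" "k + 1 \<le> n" "x \<in> {k+1..n}"
  shows "Mfun n (\<lambda>p q. of_int (unitv (k+1) x p q)) k y = - (if x \<le> y then 1 else 0)"
proof -
  have "tri n (k+1) x" "x \<in> {k..y} \<longleftrightarrow> x \<le> y" "k \<noteq> k + 1" "k - 1 \<noteq> k + 1"
    using assms unfolding tri_def by auto
  then show ?thesis unfolding Mfun_unitv by simp
qed

lemma Mfun_unitv_far_row:
  assumes "i + 2 \<le> i' \<or> i' + 2 \<le> i"
  shows "Mfun n (\<lambda>p q. of_int (unitv i' x p q)) i y = 0"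
proof -
  have "i \<noteq> i'" "i - 1 \<noteq> i'" "i + 1 \<noteq> i'" using assms by auto
  then show ?thesis unfolding Mfun_unitv by simp
qed

lemma alpha_entry: "i \<le> n \<Longrightarrow> alpha n i x p q =
   (if x \<le> p \<and> p < i \<and> q + i = n + p + 1 then 1 else 0) - (if x \<le> p \<and> p \<le> i \<and> q + i = n + p then 1 else 0)"
  unfolding alpha_def unitv_def
  by (subst (1 2) sum_indicator_unique[where b = p and P = "q + i = n + p"]
      sum_indicator_unique[where b = "p+1" and P = "q + i = n + p + 1"]; auto)

lemma ent_alpha: "i \<le> n \<Longrightarrow> ent n (\<lambda>p q. of_int (alpha n i x p q)) p q =
  (if tri n p q then (if x \<le> p \<and> p < i \<and> q + i = n + p + 1 then 1 else 0)
     - (if x \<le> p \<and> p \<le> i \<and> q + i = n + p then 1 else 0) else 0)"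
  unfolding ent_def by (simp add: alpha_entry)

lemma Nfun_alpha_prev_row:
  assumes "1 \<le> k" "k + 1 \<le> n" "y \<in> {1..k}" "x \<in> {1..k+1}"
  shows "Nfun n (\<lambda>p q. of_int (alpha n k y p q)) (k+1) x = - (if y < x then 1 else 0)"
proof -
  have "k \<le> n" using assms by simp
  have "ent n (\<lambda>p q. of_int (alpha n k y p q)) (x - 1) (n - (k + 1) + x) = - (if y < x then 1 else 0)"
       "ent n (\<lambda>p q. of_int (alpha n k y p q)) x (n - (k + 1) + x) = 0"
    unfolding ent_alpha[OF \<open>k \<le> n\<close>] tri_def using assms by auto
  then show ?thesis unfolding Nfun_def by simp
qed

lemma Nfun_alpha_next_row:
  assumes "1 \<le> k" "k + 1 \<le> n" "y \<in> {1..k}" "x \<in> {1..k+1}"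
  shows "Nfun n (\<lambda>p q. of_int (alpha n (k+1) x p q)) k y = - (if x \<le> y then 1 else 0)"
proof -
  have "ent n (\<lambda>p q. of_int (alpha n (k+1) x p q)) (y - 1) (n - k + y) = 0"
       "ent n (\<lambda>p q. of_int (alpha n (k+1) x p q)) y (n - k + y) = (if x \<le> y then 1 else 0)"
    unfolding ent_alpha[OF \<open>k + 1 \<le> n\<close>] tri_def using assms by auto
  then show ?thesis unfolding Nfun_def by simp
qed

lemma Nfun_alpha_far_row:
  assumes "i' \<le> n" "i \<le> n" "i + 2 \<le> i' \<or> i' + 2 \<le> i" "y \<in> {1..i}"
  shows "Nfun n (\<lambda>p q. of_int (alpha n i' x p q)) i y = 0"
proof -
  have "ent n (\<lambda>p q. of_int (alpha n i' x p q)) (y - 1) (n - i + y) = 0"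
       "ent n (\<lambda>p q. of_int (alpha n i' x p q)) y (n - i + y) = 0"
    unfolding ent_alpha[OF assms(1)] tri_def using assms by auto
  then show ?thesis unfolding Nfun_def by simp
qed

lemma Fth_nested_qcommutator:
  assumes l: "l > 0" and root: "exp L ^ l = 1" and q: "qpow L 1 \<noteq> qpow L (-1)"
  shows "nested_qcommutator n l L (Fop n l L a b lam) (Fth n l L a b lam) (\<lambda>i. {i..n}) a
     (\<lambda>i j m. Mfun n (shiftc m b) i j - lam i) unitv"
proof (unfold_locales)
  show "vec_linear (Fop n l L a b lam i)" for i
    unfolding Fop_def by (rule vec_linear_lin)
  show "Fop n l L a b lam i (bv n l m) =
      (\<lambda>v. \<Sum>j\<in>{i..n}. a i j * qnum L (Mfun n (shiftc m b) i j - lam i) * bv n l (addi m (unitv i j)) v)"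
    for i m
    unfolding Fop_def lin_bv[OF l] Fbas_def qnum_Mfun_normlab[OF root] bv_addi_normlab ..
  show "Mfun n (shiftc (addi m (unitv k y)) b) (k + 1) x - lam (k + 1) =
      Mfun n (shiftc m b) (k + 1) x - lam (k + 1) - (if y < x then 1 else 0)"
    if "1 \<le> k" "k + 1 \<le> n" "y \<in> {k..n}" "x \<in> {k + 1..n}" for k x y m
    using that Mfun_unitv_prev_row[of k n y x] unfolding shiftc_addi Mfun_add by simp
  show "Mfun n (shiftc (addi m (unitv (k + 1) x)) b) k y - lam k =
      Mfun n (shiftc m b) k y - lam k - (if x \<le> y then 1 else 0)"
    if "1 \<le> k" "k + 1 \<le> n" "y \<in> {k..n}" "x \<in> {k + 1..n}" for k x y m
    using that Mfun_unitv_next_row[of k n x y] unfolding shiftc_addi Mfun_add by simp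
  show "Mfun n (shiftc (addi m (unitv i' x)) b) i y - lam i = Mfun n (shiftc m b) i y - lam i"
    if "i + 2 \<le> i' \<or> i' + 2 \<le> i" for i i' x y m
    using that Mfun_unitv_far_row unfolding shiftc_addi Mfun_add by simp
qed (simp_all add: q)

lemma Eth_nested_qcommutator:
  assumes l: "l > 0" and root: "exp L ^ l = 1" and q: "qpow L 1 \<noteq> qpow L (-1)"
  shows "nested_qcommutator n l L (Eop n l L a b) (Eth n l L a b) (\<lambda>i. {1..i})
     (\<lambda>i j. apow n a (alpha n i j)) (\<lambda>i j m. Nfun n (shiftc m b) i j) (alpha n)"
proof (unfold_locales)
  show "vec_linear (Eop n l L a b i)" for i
    unfolding Eop_def by (rule vec_linear_lin)
  show "Eop n l L a b i (bv n l m) = (\<lambda>v. \<Sum>j\<in>{1..i}.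
      apow n a (alpha n i j) * qnum L (Nfun n (shiftc m b) i j) * bv n l (addi m (alpha n i j)) v)"
    for i m
    unfolding Eop_def lin_bv[OF l] Ebas_def qnum_Nfun_normlab[OF root] bv_addi_normlab ..
  show "Nfun n (shiftc (addi m (alpha n k y)) b) (k + 1) x =
      Nfun n (shiftc m b) (k + 1) x - (if y < x then 1 else 0)"
    if "1 \<le> k" "k + 1 \<le> n" "y \<in> {1..k}" "x \<in> {1..k + 1}" for k x y m
    using that Nfun_alpha_prev_row[of k n y x] unfolding shiftc_addi Nfun_add by simp
  show "Nfun n (shiftc (addi m (alpha n (k + 1) x)) b) k y =
      Nfun n (shiftc m b) k y - (if x \<le> y then 1 else 0)"
    if "1 \<le> k" "k + 1 \<le> n" "y \<in> {1..k}" "x \<in> {1..k + 1}" for k x y m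
    using that Nfun_alpha_next_row[of k n y x] unfolding shiftc_addi Nfun_add by simp
  show "Nfun n (shiftc (addi m (alpha n i' x)) b) i y = Nfun n (shiftc m b) i y"
    if "i \<le> n" "i' \<le> n" "i + 2 \<le> i' \<or> i' + 2 \<le> i" "y \<in> {1..i}" for i i' x y m
    using that Nfun_alpha_far_row[of i' n i y x] unfolding shiftc_addi Nfun_add by simp
qed (simp_all add: q)

lemma apow_sum:
  assumes "\<forall>i j. tri n i j \<longrightarrow> a i j \<noteq> 0" and "finite A"
  shows "apow n a (\<lambda>p q. \<Sum>k\<in>A. t k p q) = (\<Prod>k\<in>A. apow n a (t k))"
  using assms(2)
proof (induction A rule: finite_induct)
  case empty
  then show ?case unfolding apow_def by simp
next
  case (insert x A)
  have "apow n a (\<lambda>p q. \<Sum>k\<in>insert x A. t k p q)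
      = (\<Prod>p\<in>{p. tri n (fst p) (snd p)}. a (fst p) (snd p) powi t x (fst p) (snd p)
           * a (fst p) (snd p) powi (\<Sum>k\<in>A. t k (fst p) (snd p)))"
    unfolding apow_def using insert assms(1) by (intro prod.cong refl) (simp add: power_int_add)
  also have "\<dots> = apow n a (t x) * apow n a (\<lambda>p q. \<Sum>k\<in>A. t k p q)"
    unfolding apow_def by (rule prod.distrib)
  finally show ?case using insert by simp
qed

lemma apow_unitv: "tri n i j \<Longrightarrow> apow n a (unitv i j) = a i j"
proof -
  assume t: "tri n i j"
  have fin: "finite {p. tri n (fst p) (snd p)}"
    by (rule finite_subset[of _ "{1..n} \<times> {1..n}"]) (auto simp: tri_def)
  have "apow n a (unitv i j) = (\<Prod>p\<in>{p. tri n (fst p) (snd p)}. if p = (i, j) then a i j else 1)"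
    unfolding apow_def unitv_def by (intro prod.cong refl) auto
  also have "\<dots> = a i j" using t fin by (simp add: prod.delta)
  finally show ?thesis .
qed

lemma RF_fixed:
  assumes "r \<in> RF n s" "1 \<le> s" "s \<le> i" "i \<le> n"
  shows "r i = i"
  using assms(3,4)
proof (induction "n - i" arbitrary: i)
  case 0
  then have "i = n" "1 \<le> n" using assms(2) by auto
  moreover have "n \<le> r n \<and> r n \<le> n" using assms(1) \<open>1 \<le> n\<close> unfolding RF_def by auto
  ultimately show ?case by simp
next
  case (Suc d)
  then have "r (Suc i) = Suc i" by auto
  moreover have "r i < r (Suc i)" "i \<le> r i"
    using assms(1,2) Suc.prems Suc.hyps unfolding RF_def Rset_def by auto
  ultimately show ?case by simp
qed

lemma RE_one:
  assumes "r \<in> RE n s" "1 \<le> i" "i \<le> s" "s \<le> n"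
  shows "r i = 1"
  using assms(2,3)
proof (induction i rule: nat_induct_at_least)
  case base
  have "1 \<le> r 1 \<and> r 1 \<le> 1" using assms(1) base assms(4) unfolding RE_def by auto
  then show ?case by simp
next
  case (Suc i)
  then have "r i = 1" by simp
  moreover have "r (Suc i) \<le> r i" "1 \<le> r (Suc i)"
    using assms(1,4) Suc unfolding RE_def Rset_def by auto
  ultimately show ?case by simp
qed

definition row_sum :: "nat \<Rightarrow> carr \<Rightarrow> nat \<Rightarrow> nat \<Rightarrow> nat \<Rightarrow> complex" where
  "row_sum n c k u v = (\<Sum>p\<in>{u..<v}. ent n c k p)"

lemma row_sum_split: "u \<le> v \<Longrightarrow> v \<le> w \<Longrightarrow> row_sum n c k u v + row_sum n c k v w = row_sum n c k u w"
  unfolding row_sum_def by (rule sum.atLeastLessThan_concat)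

lemma row_sum_Suc: "u \<le> v \<Longrightarrow> row_sum n c k u (Suc v) = row_sum n c k u v + ent n c k v"
  unfolding row_sum_def by simp

lemma row_sum_row0: "row_sum n c 0 u v = 0"
  unfolding row_sum_def ent_def tri_def by simp

lemma row_sum_from_pred: "1 \<le> k \<Longrightarrow> row_sum n c k (k-1) v = row_sum n c k k v"
  unfolding row_sum_def
  by (rule sum.mono_neutral_right) (auto simp: ent_def tri_def)

lemma Mfun_row_sum:
  "1 \<le> i \<Longrightarrow> i \<le> j \<Longrightarrow> Mfun n c i j = row_sum n c i i j - row_sum n c (i-1) (i-1) j
     + row_sum n c i i (Suc j) - row_sum n c (Suc i) (Suc i) (Suc j)"
proof -
  assume i: "1 \<le> i" "i \<le> j"
  then have "{i-1..j-1} = {i-1..<j}" "{i..j} = {i..<Suc j}" by auto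
  then have "Mfun n c i j = row_sum n c i (i-1) j - row_sum n c (i-1) (i-1) j
      + (row_sum n c i i (Suc j) - row_sum n c (Suc i) i (Suc j))"
    by (simp only: Mfun_def row_sum_def sum_subtractf Suc_eq_plus1)
  then show ?thesis using row_sum_from_pred[OF i(1)] row_sum_from_pred[of "Suc i" n c] by simp
qed

lemma Mfun_diag: "1 \<le> s \<Longrightarrow> Mfun n c s s = ent n c s s - ent n c (s-1) (s-1)"
  unfolding Mfun_def by (auto simp: ent_def tri_def)

definition r_prev :: "nat \<Rightarrow> (nat \<Rightarrow> nat) \<Rightarrow> nat \<Rightarrow> nat" where
  "r_prev n r k = (if k = 1 then n else r (k - 1))"

lemma r_le_r_prev:
  assumes "\<forall>i. 1 \<le> i \<and> i < s \<longrightarrow> r (i+1) \<le> r i" "r t \<le> n" "1 \<le> t" "t \<le> s"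
  shows "r t \<le> r_prev n r t"
proof (cases "t = 1")
  case False
  then have "1 \<le> t - 1 \<and> t - 1 < s" using assms(3,4) by auto
  then have "r (t - 1 + 1) \<le> r (t - 1)" using assms(1) by blast
  with False assms(3) show ?thesis by (simp add: r_prev_def)
qed (use assms in \<open>simp add: r_prev_def\<close>)

lemma sum_Mfun_descending:
  assumes dec: "\<forall>i. 1 \<le> i \<and> i < s \<longrightarrow> r (i+1) \<le> r i"
    and bnd: "\<forall>i\<in>{1..n}. i \<le> r i \<and> r i \<le> n" and t: "1 \<le> t" "t \<le> s" and "s \<le> n"
  shows "(\<Sum>i\<in>{1..<t}. Mfun n c i (r i)) = row_sum n c 1 1 (Suc n)
     + (\<Sum>k\<in>{1..<t}. row_sum n c k (r (k+1)) (r k))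
     - (\<Sum>k\<in>{1..<t}. row_sum n c k (Suc (r k)) (Suc (r_prev n r k)))
     + row_sum n c (t-1) (t-1) (r t) - row_sum n c t t (Suc (r_prev n r t))"
  using t
proof (induction t rule: nat_induct_at_least)
  case base
  then show ?case by (simp add: row_sum_row0 r_prev_def)
next
  case (Suc t)
  have t: "1 \<le> t" "Suc t \<le> s" using Suc by auto
  have rt: "t \<le> r t" "r t \<le> n" using bnd t \<open>s \<le> n\<close> by auto
  have rt1: "r (Suc t) \<le> r t" "Suc t \<le> r (Suc t)" using dec bnd t \<open>s \<le> n\<close> by auto
  have R: "r t \<le> r_prev n r t" using r_le_r_prev[OF dec rt(2) t(1)] t by simp
  have M: "Mfun n c t (r t) = row_sum n c t t (r t) - row_sum n c (t-1) (t-1) (r t)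
      + row_sum n c t t (Suc (r t)) - row_sum n c (Suc t) (Suc t) (Suc (r t))"
    using Mfun_row_sum[OF t(1) rt(1)] .
  have "row_sum n c t (r (Suc t)) (r t) + row_sum n c t t (r (Suc t)) = row_sum n c t t (r t)"
    using row_sum_split[of t "r (Suc t)" "r t" n c t] rt1 bnd t \<open>s \<le> n\<close> by (simp add: add.commute)
  moreover have "row_sum n c t t (Suc (r_prev n r t))
      = row_sum n c t t (Suc (r t)) + row_sum n c t (Suc (r t)) (Suc (r_prev n r t))"
    using row_sum_split[of t "Suc (r t)" "Suc (r_prev n r t)" n c t] rt R by simp
  moreover have "r_prev n r (Suc t) = r t" using t by (simp add: r_prev_def)
  ultimately show ?case
    unfolding sum.atLeastLessThan_Suc[OF t(1)] Suc.IH[OF Suc_leD[OF t(2)]] M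
    by (simp add: algebra_simps)
qed

lemma sum_Mfun_fixed:
  assumes r: "r \<in> RF n s" and "1 \<le> s" "s \<le> t" "t \<le> n"
  shows "(\<Sum>i\<in>{s<..t}. Mfun n c i (r i)) = ent n c t t - ent n c s s"
  using assms(3,4)
proof (induction t rule: dec_induct)
  case (step t)
  then have "{s<..Suc t} = insert (Suc t) {s<..t}" by auto
  then show ?case
    using step RF_fixed[OF r \<open>1 \<le> s\<close>, of "Suc t"] Mfun_diag[of "Suc t" n c] by simp
qed simp

lemma Cfun_row_sums:
  assumes r: "r \<in> RF n s" and s: "1 \<le> s" "s \<le> n"
  shows "Cfun n c s r = ent n c (s-1) (s-1) - ent n c n n + row_sum n c 1 1 (Suc n)
     + (\<Sum>k\<in>{1..<s}. row_sum n c k (r (k+1)) (r k))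
     - (\<Sum>k\<in>{1..<s}. row_sum n c k (Suc (r k)) (Suc (r_prev n r k)))
     - row_sum n c s (Suc s) (Suc (r_prev n r s))"
proof -
  have bnd: "\<forall>i\<in>{1..n}. i \<le> r i \<and> r i \<le> n" using r unfolding RF_def by auto
  have first: "(\<Sum>k\<in>{1..n}. ent n c 1 k) = row_sum n c 1 1 (Suc n)"
    unfolding row_sum_def by (intro sum.cong) auto
  have below: "(\<Sum>k\<in>{1..s-1}. \<Sum>p\<in>{(if k+1 = 0 then n else r (k+1))..(if k = 0 then n else r k) - 1}. ent n c k p)
      = (\<Sum>k\<in>{1..<s}. row_sum n c k (r (k+1)) (r k))"
  proof (intro sum.cong)
    fix k assume k: "k \<in> {1..<s}"
    then have "{r (k+1)..r k - 1} = {r (k+1)..<r k}" using bnd s by force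
    then show "(\<Sum>p\<in>{(if k+1 = 0 then n else r (k+1))..(if k = 0 then n else r k) - 1}. ent n c k p)
        = row_sum n c k (r (k+1)) (r k)" using k unfolding row_sum_def by simp
  qed (use s in auto)
  have above: "(\<Sum>k\<in>{1..s}. \<Sum>p\<in>{(if k = 0 then n else r k) + 1..(if k-1 = 0 then n else r (k-1))}. ent n c k p)
      = (\<Sum>k\<in>{1..s}. row_sum n c k (Suc (r k)) (Suc (r_prev n r k)))"
  proof (intro sum.cong refl)
    fix k assume "k \<in> {1..s}"
    then have "{r k + 1..(if k-1 = 0 then n else r (k-1))} = {Suc (r k)..<Suc (r_prev n r k)}"
      by (auto simp: r_prev_def)
    then show "(\<Sum>p\<in>{(if k = 0 then n else r k) + 1..(if k-1 = 0 then n else r (k-1))}. ent n c k p)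
        = row_sum n c k (Suc (r k)) (Suc (r_prev n r k))" using \<open>k \<in> {1..s}\<close> unfolding row_sum_def by simp
  qed
  have "{1..s} = insert s {1..<s}" using s by auto
  then show ?thesis
    unfolding Cfun_def Let_def first below above using RF_fixed[OF r s(1) order_refl s(2)]
    by (simp add: algebra_simps)
qed

lemma Cfun_eq_Mfun_sums:
  assumes r: "r \<in> RF n s" and s: "1 \<le> s" "s \<le> n"
  shows "(\<Sum>i\<in>{1..<s}. Mfun n c i (r i)) - (\<Sum>i\<in>{s<..n}. Mfun n c i (r i)) = Cfun n c s r"
proof -
  have dec: "\<forall>i. 1 \<le> i \<and> i < s \<longrightarrow> r (i+1) \<le> r i" using r unfolding RF_def Rset_def by auto
  have bnd: "\<forall>i\<in>{1..n}. i \<le> r i \<and> r i \<le> n" using r unfolding RF_def by auto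
  have rs: "r s = s" using RF_fixed[OF r s(1) order_refl s(2)] .
  have R: "s \<le> r_prev n r s" using r_le_r_prev[OF dec _ s(1) order_refl] rs s by simp
  have "row_sum n c (s-1) (s-1) (r s) = ent n c (s-1) (s-1)"
    using row_sum_Suc[of "s-1" "s-1" n c "s-1"] rs s by (simp add: row_sum_def)
  moreover have "row_sum n c s s (Suc (r_prev n r s)) = ent n c s s + row_sum n c s (Suc s) (Suc (r_prev n r s))"
    using row_sum_split[of s "Suc s" "Suc (r_prev n r s)" n c s] row_sum_Suc[of s s n c s] R
    by (simp add: row_sum_def)
  ultimately show ?thesis
    unfolding sum_Mfun_descending[OF dec bnd s(1) order_refl s(2)] sum_Mfun_fixed[OF r s(1) s(2) order_refl]
      Cfun_row_sums[OF r s] by (simp add: algebra_simps)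
qed

lemma Dfun_eq_Nfun_sums:
  assumes r: "r \<in> RE n s" and s: "1 \<le> s" "s \<le> n"
  shows "(\<Sum>i\<in>{1..<s}. Nfun n c i (r i)) - (\<Sum>i\<in>{s<..n}. Nfun n c i (r i)) = Dfun n c s r"
proof -
  have "(\<Sum>i\<in>{1..<s}. Nfun n c i (r i)) = (\<Sum>i\<in>{1..<s}. - ent n c 1 (n - i + 1))"
    using RE_one[OF r] s by (intro sum.cong refl) (auto simp: Nfun_def ent_def tri_def)
  also have "\<dots> = - (\<Sum>k\<in>{n-s+2..n}. ent n c 1 k)"
    unfolding sum_negf
    by (rule arg_cong[where f = uminus], rule sum.reindex_bij_witness[where i = "\<lambda>k. n + 1 - k"
          and j = "\<lambda>i. n - i + 1"]) (use s in auto)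
  moreover have "(\<Sum>i\<in>{s<..n}. Nfun n c i (r i))
      = (\<Sum>k\<in>{s+1..n}. ent n c (r k - 1) (n - k + r k) - ent n c (r k) (n - k + r k))"
    unfolding Nfun_def by (rule sum.cong) auto
  ultimately show ?thesis unfolding Dfun_def by simp
qed

lemma minus_one_power_diff: "s \<le> n \<Longrightarrow> (-1 :: 'a::ring_1) ^ (n - s) = (-1) ^ (s + n)"
proof -
  assume "s \<le> n"
  then have "s + n = (n - s) + 2 * s" by simp
  then have "(-1 :: 'a) ^ (s + n) = (-1) ^ (n - s) * ((-1) ^ 2) ^ s"
    by (simp only: power_add power_mult)
  then show ?thesis by simp
qed

lemma valley_coeff_RF:
  assumes r: "r \<in> RF n s" and s: "1 \<le> s" "s \<le> n"
  shows "valley_coeff L n s (\<lambda>i. Mfun n c i (r i) - lam i)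
     = (-1) ^ (s + n) * qpow L (Cfun n c s r - lamS n lam s + 1 - of_nat s)
       * qnum L (- ent n c (s-1) (s-1) + ent n c s s - lam s)"
proof -
  have "{1..<s} = {1..s-1}" "{s<..n} = {s+1..n}" using s by auto
  then have "(\<Sum>i\<in>{1..<s}. Mfun n c i (r i) - lam i - 1) - (\<Sum>i\<in>{s<..n}. Mfun n c i (r i) - lam i)
      = ((\<Sum>i\<in>{1..<s}. Mfun n c i (r i)) - (\<Sum>i\<in>{s<..n}. Mfun n c i (r i)))
        - lamS n lam s - of_nat (s - 1)"
    by (simp add: sum_subtractf lamS_def)
  also have "\<dots> = Cfun n c s r - lamS n lam s + 1 - of_nat s"
    unfolding Cfun_eq_Mfun_sums[OF r s] using s by (simp add: of_nat_diff)
  finally have "(\<Sum>i\<in>{1..<s}. Mfun n c i (r i) - lam i - 1) - (\<Sum>i\<in>{s<..n}. Mfun n c i (r i) - lam i)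
      = Cfun n c s r - lamS n lam s + 1 - of_nat s" .
  moreover have "Mfun n c s (r s) = - ent n c (s-1) (s-1) + ent n c s s"
    using Mfun_diag[OF s(1), of n c] RF_fixed[OF r s(1) order_refl s(2)] by simp
  ultimately show ?thesis
    unfolding valley_coeff_closed[OF s] minus_one_power_diff[OF s(2)] by simp
qed

lemma valley_coeff_RE:
  assumes r: "r \<in> RE n s" and s: "1 \<le> s" "s \<le> n"
  shows "valley_coeff L n s (\<lambda>i. Nfun n c i (r i))
     = (-1) ^ (s + n) * qpow L (Dfun n c s r + 1 - of_nat s) * qnum L (- ent n c 1 (n - s + 1))"
proof -
  have "(\<Sum>i\<in>{1..<s}. Nfun n c i (r i) - 1) - (\<Sum>i\<in>{s<..n}. Nfun n c i (r i))
      = ((\<Sum>i\<in>{1..<s}. Nfun n c i (r i)) - (\<Sum>i\<in>{s<..n}. Nfun n c i (r i))) - of_nat (s - 1)"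
    by (simp add: sum_subtractf)
  also have "\<dots> = Dfun n c s r + 1 - of_nat s"
    unfolding Dfun_eq_Nfun_sums[OF r s] using s by (simp add: of_nat_diff)
  finally have "(\<Sum>i\<in>{1..<s}. Nfun n c i (r i) - 1) - (\<Sum>i\<in>{s<..n}. Nfun n c i (r i))
      = Dfun n c s r + 1 - of_nat s" .
  moreover have "Nfun n c s (r s) = - ent n c 1 (n - s + 1)"
    using RE_one[OF r s(1) order_refl s(2)] unfolding Nfun_def ent_def tri_def by simp
  ultimately show ?thesis
    unfolding valley_coeff_closed[OF s] minus_one_power_diff[OF s(2)] by simp
qed

lemma tuples_valley_eq_RF: "s \<in> {1..n} \<Longrightarrow> {j \<in> tuples (\<lambda>i. {i..n}) n. valley n s j} = RF n s"
  unfolding tuples_def valley_def RF_def Rset_def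
  by (auto simp: Suc_le_eq) (metis Suc_le_eq atLeastAtMost_iff le_trans)

lemma tuples_valley_eq_RE: "s \<in> {1..n} \<Longrightarrow> {j \<in> tuples (\<lambda>i. {1..i}) n. valley n s j} = RE n s"
  unfolding tuples_def valley_def RE_def Rset_def by auto (meson atLeastAtMost_iff le_trans)

lemma apow_epsr:
  assumes "\<forall>i j. tri n i j \<longrightarrow> a i j \<noteq> 0" and "r \<in> RF n s"
  shows "apow n a (epsr n r) = (\<Prod>i\<in>{1..n}. a i (r i))"
proof -
  have "apow n a (epsr n r) = (\<Prod>i\<in>{1..n}. apow n a (unitv i (r i)))"
    unfolding epsr_def by (rule apow_sum[OF assms(1) finite_atLeastAtMost])
  also have "\<dots> = (\<Prod>i\<in>{1..n}. a i (r i))"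
    using assms(2) unfolding RF_def by (intro prod.cong refl) (auto simp: apow_unitv tri_def)
  finally show ?thesis .
qed

lemma Fth_bv:
  assumes "1 \<le> n" "l > 0" "exp L ^ l = 1" "qpow L 1 \<noteq> qpow L (-1)"
    and nonzero: "\<forall>i j. tri n i j \<longrightarrow> a i j \<noteq> 0"
  shows "Fth n l L a b lam n (bv n l m) =
           (\<lambda>k. \<Sum>s\<in>{1..n}. \<Sum>r\<in>RF n s. (-1) ^ (s + n) * apow n a (epsr n r)
              * qpow L (Cfun n (shiftc m b) s r - lamS n lam s + 1 - of_nat s)
              * qnum L (- ent n (shiftc m b) (s-1) (s-1) + ent n (shiftc m b) s s - lam s)
              * bv n l (addi m (epsr n r)) k)"
proof -
  interpret nested_qcommutator n l L "Fop n l L a b lam" "Fth n l L a b lam" "\<lambda>i. {i..n}" a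
    "\<lambda>i j m. Mfun n (shiftc m b) i j - lam i" unitv
    using Fth_nested_qcommutator assms(2-4) .
  have "shift_sum unitv n = epsr n" unfolding shift_sum_def epsr_def ..
  moreover have "phases m r = (\<lambda>i. Mfun n (shiftc m b) i (r i) - lam i)" for r
    unfolding phases_def ..
  ultimately show ?thesis
    unfolding Th_bv_valleys[OF assms(1)]
    by (intro ext sum.cong refl)
      (simp_all add: tuples_valley_eq_RF valley_coeff_RF apow_epsr[OF nonzero])
qed

lemma Eth_bv:
  assumes "1 \<le> n" "l > 0" "exp L ^ l = 1" "qpow L 1 \<noteq> qpow L (-1)"
    and nonzero: "\<forall>i j. tri n i j \<longrightarrow> a i j \<noteq> 0"
  shows "Eth n l L a b n (bv n l m) =
           (\<lambda>k. \<Sum>s\<in>{1..n}. \<Sum>r\<in>RE n s. (-1) ^ (s + n) * apow n a (alphar n r)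
              * qpow L (Dfun n (shiftc m b) s r + 1 - of_nat s)
              * qnum L (- ent n (shiftc m b) 1 (n - s + 1))
              * bv n l (addi m (alphar n r)) k)"
proof -
  interpret nested_qcommutator n l L "Eop n l L a b" "Eth n l L a b" "\<lambda>i. {1..i}"
    "\<lambda>i j. apow n a (alpha n i j)" "\<lambda>i j m. Nfun n (shiftc m b) i j" "alpha n"
    using Eth_nested_qcommutator assms(2-4) .
  have "shift_sum (alpha n) n = alphar n" unfolding shift_sum_def alphar_def ..
  moreover have "phases m r = (\<lambda>i. Nfun n (shiftc m b) i (r i))" for r
    unfolding phases_def ..
  moreover have "apow n a (alphar n r) = (\<Prod>i\<in>{1..n}. apow n a (alpha n i (r i)))" for r
    unfolding alphar_def by (rule apow_sum[OF nonzero finite_atLeastAtMost])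
  ultimately show ?thesis
    unfolding Th_bv_valleys[OF assms(1)]
    by (intro ext sum.cong refl) (simp_all add: tuples_valley_eq_RE[simplified] valley_coeff_RE)
qed

theorem lemma5p3:
  fixes n l :: nat and eps L :: complex and a b :: carr
    and lam :: "nat \<Rightarrow> complex" and m :: iarr
  assumes "n \<ge> 1" and "l > 2" and "odd l" and "coprime l (n + 1)"
    and "exp L = eps" and "eps ^ l = 1" and "\<forall>k. 0 < k \<and> k < l \<longrightarrow> eps ^ k \<noteq> 1"
    and "\<forall>i j. tri n i j \<longrightarrow> a i j \<noteq> 0"
    and "m \<in> labels n l"
  shows "Fth n l L a b lam n (bv n l m) =
           (\<lambda>k. \<Sum>s\<in>{1..n}. \<Sum>r\<in>RF n s. (-1) ^ (s + n) * apow n a (epsr n r)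
              * qpow L (Cfun n (shiftc m b) s r - lamS n lam s + 1 - of_nat s)
              * qnum L (- ent n (shiftc m b) (s-1) (s-1) + ent n (shiftc m b) s s - lam s)
              * bv n l (addi m (epsr n r)) k)
       \<and> Eth n l L a b n (bv n l m) =
           (\<lambda>k. \<Sum>s\<in>{1..n}. \<Sum>r\<in>RE n s. (-1) ^ (s + n) * apow n a (alphar n r)
              * qpow L (Dfun n (shiftc m b) s r + 1 - of_nat s)
              * qnum L (- ent n (shiftc m b) 1 (n - s + 1))
              * bv n l (addi m (alphar n r)) k)"
proof -
  have root: "exp L ^ l = 1" using assms(5,6) by simp
  have "qpow L 1 \<noteq> qpow L (-1)"
  proof
    assume "qpow L 1 = qpow L (-1)"
    then have "eps = inverse eps" using assms(5) unfolding qpow_def by (simp add: exp_minus)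
    moreover have "eps \<noteq> 0" using assms(5) by auto
    ultimately have "eps ^ 2 = 1" by (metis power2_eq_square right_inverse)
    then show False using assms(2,7) by auto
  qed
  then show ?thesis using Fth_bv Eth_bv assms(1,2,8) root by simp
qed

end
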